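(* Let $X$ be a topological vector space, $Z$ a locally convex topological vector space, $C\subseteq Z$ a nonempty closed convex cone with $C^-\neq\{0\}$, $x_0\in X$, and $f:X\to\mathcal{F}(Z,C)$ convex-valued. Assume there is a set $B\subseteq Z^*$ with $\{tz^*\colon t\ge0,\ z^*\in B\}=C^-$ such that \[ \forall z\in Z:\ \sup_{z^*\in B}z^*(z)<\infty\qquad\text{and}\qquad\forall V\in\mathcal{V}(0):\ \inf_{z^*\in B}\sup_{z\in V}[-z^*(z)]>0, \] and such that the scalarizations are upper semicontinuous at $x_0$ uniformly with respect to $B$, i.e. for every $\varepsilon>0$ there is a neighborhood $U$ of $x_0$ such that for all $x\in U$ and all $z^*\in B$: $\varphi_{(f,z^* )}(x)<-1/\varepsilon$ if $\varphi_{(f,z^* )}(x_0)=-\infty$, and $\varphi_{(f,z^* )}(x)<\varphi_{(f,z^* )}(x_0)+\varepsilon$ otherwise. Then $f$ is lower continuous at $x_0$.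
   Context: $\mathcal{F}(Z,C)=\{A\subseteq Z\colon A=\operatorname{cl}(A+C)\}$ (empty set included); $C^-=\{z^*\in Z^*\colon z^*(z)\le0\ \forall z\in C\}$; $\mathcal{V}(0)$ is the system of neighborhoods of $0$ in $Z$. $\varphi_{(f,z^* )}(x)=\inf_{z\in f(x)}(-z^*(z))$, with $\inf\emptyset=+\infty$. $f$ is lower continuous at $x_0$ iff for every $z_0\in f(x_0)$ and every neighborhood $V$ of $z_0$ there is a neighborhood $U$ of $x_0$ with $f(x)\cap V\neq\emptyset$ for all $x\in U$. *)

theory Defs
  imports "HOL-Analysis.Analysis"
begin

definition tvs :: "'a::{real_vector,topological_space} itself \<Rightarrow> bool" where
  "tvs _ \<longleftrightarrow> continuous_on UNIV (\<lambda>p::'a \<times> 'a. fst p + snd p) \<and>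
              continuous_on UNIV (\<lambda>p::real \<times> 'a. fst p *\<^sub>R snd p)"

definition locally_convex_tvs :: "'a::{real_vector,topological_space} itself \<Rightarrow> bool" where
  "locally_convex_tvs T \<longleftrightarrow> tvs T \<and>
     (\<forall>U::'a set. open U \<and> 0 \<in> U \<longrightarrow> (\<exists>V. open V \<and> convex V \<and> 0 \<in> V \<and> V \<subseteq> U))"

definition nbhd :: "'a::topological_space \<Rightarrow> 'a set \<Rightarrow> bool" where
  "nbhd x V \<longleftrightarrow> (\<exists>U. open U \<and> x \<in> U \<and> U \<subseteq> V)"

definition dual_space :: "('a::{real_vector,topological_space} \<Rightarrow> real) set" where
  "dual_space = {l. linear l \<and> continuous_on UNIV l}"

definition neg_dual_cone :: "'a::{real_vector,topological_space} set \<Rightarrow> ('a \<Rightarrow> real) set" where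
  "neg_dual_cone C = {l \<in> dual_space. \<forall>z\<in>C. l z \<le> 0}"

text \<open>F(Z,C) = {A \<subseteq> Z. A = cl(A + C)}, empty set included.\<close>
definition upper_closed_sets :: "'a::{real_vector,topological_space} set \<Rightarrow> 'a set set" where
  "upper_closed_sets C = {A. A = closure {a + c | a c. a \<in> A \<and> c \<in> C}}"

text \<open>Scalarization phi_(f,z*)(x) = inf_{z \<in> f x} (- z*(z)), inf of empty set = +\<infinity>.\<close>
definition scalarization :: "('x \<Rightarrow> 'z set) \<Rightarrow> ('z \<Rightarrow> real) \<Rightarrow> 'x \<Rightarrow> ereal" where
  "scalarization f l x = (INF z\<in>f x. ereal (- l z))"

definition lower_continuous_at ::
    "('x::topological_space \<Rightarrow> 'z::topological_space set) \<Rightarrow> 'x \<Rightarrow> bool" where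
  "lower_continuous_at f x0 \<longleftrightarrow>
     (\<forall>z0\<in>f x0. \<forall>V. nbhd z0 V \<longrightarrow> (\<exists>U. nbhd x0 U \<and> (\<forall>x\<in>U. f x \<inter> V \<noteq> {})))"

end

theory Submission
  imports Defs
begin

text \<open>Fix z0 \<in> f x0 and a convex open neighbourhood z0 + W of z0. If f x missed z0 + W, the
  Hahn--Banach theorem (via the Minkowski functional of an open convex set) would separate the
  convex set f x from z0 + W by a continuous linear functional. As f x + C \<subseteq> f x, this functional
  lies in C^-, hence is a positive multiple of some l \<in> B, and then
  \<phi>(f,l)(x) \<ge> -l z0 + sup_W (-l) while \<phi>(f,l)(x0) \<le> -l z0. The two conditions on B give
  sup_W (-l) \<ge> d > 0 and l z0 < m uniformly in l \<in> B, so uniform upper semicontinuity with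
  \<epsilon> = min d (1/m) rules this out for x near x0.\<close>

section \<open>Hahn--Banach for sublinear functionals\<close>

definition sublinear :: "('a::real_vector \<Rightarrow> real) \<Rightarrow> bool" where
  "sublinear p \<longleftrightarrow> (\<forall>x y. p (x + y) \<le> p x + p y) \<and> (\<forall>c x. c > 0 \<longrightarrow> p (c *\<^sub>R x) = c * p x)"

lemma sublinear_add_le: "sublinear p \<Longrightarrow> p (x + y) \<le> p x + p y"
  unfolding sublinear_def by blast

lemma sublinear_scaleR: "sublinear p \<Longrightarrow> c > 0 \<Longrightarrow> p (c *\<^sub>R x) = c * p x"
  unfolding sublinear_def by blast

lemma sublinear_zero:
  assumes "sublinear p" shows "p 0 = 0"
  using sublinear_scaleR[OF assms, of 2 0] by simp

lemma sublinear_scaleR_ge: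
  assumes p: "sublinear p" shows "t * p x \<le> p (t *\<^sub>R x)"
proof (cases "t < 0")
  case True
  have "0 = p (t *\<^sub>R x + (-t) *\<^sub>R x)"
    using sublinear_zero[OF p] by (simp flip: scaleR_left_distrib)
  also have "\<dots> \<le> p (t *\<^sub>R x) + p ((-t) *\<^sub>R x)" by (rule sublinear_add_le[OF p])
  also have "p ((-t) *\<^sub>R x) = - t * p x" using sublinear_scaleR[OF p, of "-t"] True by simp
  finally show ?thesis by simp
next
  case False
  then show ?thesis
    using sublinear_scaleR[OF p, of t x] sublinear_zero[OF p] by (cases "t = 0") auto
qed

text \<open>Linear functionals dominated by p on a subspace are encoded by their graphs.\<close>
definition dominated_subspace :: "('a::real_vector \<Rightarrow> real) \<Rightarrow> ('a \<times> real) set \<Rightarrow> bool" where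
  "dominated_subspace p G \<longleftrightarrow> subspace G \<and> (\<forall>(y, b)\<in>G. b \<le> p y)"

lemma dominated_subspace_le: "dominated_subspace p G \<Longrightarrow> (y, b) \<in> G \<Longrightarrow> b \<le> p y"
  unfolding dominated_subspace_def by blast

lemma dominated_subspace_Union:
  assumes "chain\<^sub>\<subseteq> \<G>" "\<G> \<noteq> {}" "\<And>G. G \<in> \<G> \<Longrightarrow> dominated_subspace p G"
  shows "dominated_subspace p (\<Union>\<G>)"
proof -
  have "subspace (\<Union>\<G>)"
    unfolding subspace_def
  proof (intro conjI ballI allI)
    show "0 \<in> \<Union>\<G>"
      using assms(2,3) by (auto simp: dominated_subspace_def intro: subspace_0)
  next
    fix x y assume "x \<in> \<Union>\<G>" "y \<in> \<Union>\<G>"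
    then obtain X Y where "X \<in> \<G>" "Y \<in> \<G>" "x \<in> X" "y \<in> Y" by auto
    moreover have "X \<subseteq> Y \<or> Y \<subseteq> X" using assms(1) calculation by (auto simp: chain_subset_def)
    ultimately show "x + y \<in> \<Union>\<G>"
      using assms(3) unfolding dominated_subspace_def by (metis UnionI subsetD subspace_add)
  next
    fix c x assume "x \<in> \<Union>\<G>"
    then show "c *\<^sub>R x \<in> \<Union>\<G>"
      using assms(3) by (auto simp: dominated_subspace_def intro: subspace_scale)
  qed
  then show ?thesis using assms(3) by (auto simp: dominated_subspace_def)
qed

lemma dominated_subspace_extension_value:
  assumes p: "sublinear p" and G: "dominated_subspace p G"
  obtains c where "\<And>y b. (y, b) \<in> G \<Longrightarrow> b - p (y - x) \<le> c"
    "\<And>y b. (y, b) \<in> G \<Longrightarrow> c \<le> p (y + x) - b"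
proof -
  have sG: "subspace G" using G by (simp add: dominated_subspace_def)
  have bounds: "b - p (y - x) \<le> p (y' + x) - b'" if "(y, b) \<in> G" "(y', b') \<in> G" for y b y' b'
  proof -
    have "b + b' \<le> p ((y - x) + (y' + x))"
      using dominated_subspace_le[OF G subspace_add[OF sG that, simplified]] by simp
    also have "\<dots> \<le> p (y - x) + p (y' + x)" by (rule sublinear_add_le[OF p])
    finally show ?thesis by simp
  qed
  define S where "S = {b - p (y - x) | y b. (y, b) \<in> G}"
  have G0: "(0, 0) \<in> G" using subspace_0[OF sG] by (simp add: zero_prod_def)
  have S: "S \<noteq> {}" "bdd_above S"
    using G0 bounds[OF _ G0] unfolding S_def bdd_above_def by auto
  show ?thesis
  proof
    show "b - p (y - x) \<le> Sup S" if "(y, b) \<in> G" for y b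
      using that by (intro cSup_upper[OF _ S(2)]) (auto simp: S_def)
    show "Sup S \<le> p (y + x) - b" if "(y, b) \<in> G" for y b
      using that bounds by (intro cSup_least[OF S(1)]) (auto simp: S_def)
  qed
qed

context
  fixes p :: "'a::real_vector \<Rightarrow> real" and G :: "('a \<times> real) set" and x :: 'a and c :: real
  assumes p: "sublinear p" and G: "dominated_subspace p G"
    and upper: "\<And>y b. (y, b) \<in> G \<Longrightarrow> b - p (y - x) \<le> c"
    and lower: "\<And>y b. (y, b) \<in> G \<Longrightarrow> c \<le> p (y + x) - b"
begin

lemma dominated_subspace_extension_le:
  assumes yb: "(y, b) \<in> G"
  shows "b + k * c \<le> p (y + k *\<^sub>R x)"
proof -
  have scale: "(t *\<^sub>R y, t * b) \<in> G" for t
    using G yb subspace_scale[of G "(y, b)" t] by (simp add: dominated_subspace_def)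
  consider "k > 0" | "k = 0" | "k < 0" by linarith
  then show ?thesis
  proof cases
    case 1
    have "k * c \<le> k * (p ((1/k) *\<^sub>R y + x) - (1/k) * b)"
      using lower[OF scale[of "1/k"]] 1 by simp
    also have "\<dots> = p (y + k *\<^sub>R x) - b"
      using sublinear_scaleR[OF p 1, of "(1/k) *\<^sub>R y + x"] 1
      by (simp add: right_diff_distrib scaleR_add_right)
    finally show ?thesis by simp
  next
    case 2
    then show ?thesis using dominated_subspace_le[OF G yb] by simp
  next
    case 3
    have "-k * ((1/-k) * b - p ((1/-k) *\<^sub>R y - x)) \<le> -k * c"
      using upper[OF scale[of "1/-k"]] 3 by (simp add: mult_left_mono)
    moreover have "-k * p ((1/-k) *\<^sub>R y - x) = p (y + k *\<^sub>R x)"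
      using sublinear_scaleR[OF p, of "-k" "(1/-k) *\<^sub>R y - x"] 3 by (simp add: scaleR_diff_right)
    ultimately show ?thesis using 3 by (simp add: right_diff_distrib)
  qed
qed

lemma dominated_subspace_extend: "dominated_subspace p (span (insert (x, c) G))"
  unfolding dominated_subspace_def
proof (intro conjI subspace_span ballI)
  have "subspace G" using G by (simp add: dominated_subspace_def)
  fix z assume "z \<in> span (insert (x, c) G)"
  then obtain k where "z - k *\<^sub>R (x, c) \<in> G"
    unfolding span_breakdown_eq span_eq_iff[THEN iffD2, OF \<open>subspace G\<close>] by blast
  then obtain y b where "(y, b) \<in> G" "z = (y + k *\<^sub>R x, b + k * c)"
    by (cases z) auto
  then show "case z of (y, b) \<Rightarrow> b \<le> p y" using dominated_subspace_extension_le by simp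
qed

end

lemma dominated_subspace_unique:
  assumes p: "sublinear p" and G: "dominated_subspace p G" and "(x, a) \<in> G" "(x, b) \<in> G"
  shows "a = b"
proof -
  have "subspace G" using G by (simp add: dominated_subspace_def)
  then have "(0, a - b) \<in> G" "(0, b - a) \<in> G"
    using subspace_diff assms(3,4) by fastforce+
  then have "a - b \<le> 0" "b - a \<le> 0"
    using dominated_subspace_le[OF G] sublinear_zero[OF p] by force+
  then show ?thesis by simp
qed

lemma dominated_subspace_graph:
  assumes p: "sublinear p" and G: "dominated_subspace p G" and total: "\<And>x. \<exists>a. (x, a) \<in> G"
  obtains g where "linear g" "\<And>x. (x, g x) \<in> G"
proof -
  have sG: "subspace G" using G by (simp add: dominated_subspace_def)
  note unique = dominated_subspace_unique[OF p G]
  define g where "g x = (THE a. (x, a) \<in> G)" for x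
  have graph: "(x, g x) \<in> G" for x
    unfolding g_def using total[of x] unique by (metis theI)
  have "linear g"
  proof (rule linearI)
    fix x y
    have "(x + y, g x + g y) \<in> G" using subspace_add[OF sG graph graph] by simp
    then show "g (x + y) = g x + g y" using unique graph by blast
  next
    fix r x
    have "(r *\<^sub>R x, r * g x) \<in> G" using subspace_scale[OF sG graph] by simp
    then show "g (r *\<^sub>R x) = r *\<^sub>R g x" using unique graph by auto
  qed
  then show ?thesis using that graph by blast
qed

lemma sublinear_dominated_linear_exists:
  assumes p: "sublinear p"
  obtains g where "linear g" "\<And>x. g x \<le> p x" "g k = p k"
proof -
  define \<A> where "\<A> = {G. dominated_subspace p G \<and> (k, p k) \<in> G}"
  have "\<forall>(y, b)\<in>span {(k, p k)}. b \<le> p y"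
    using sublinear_scaleR_ge[OF p] by (auto simp: span_singleton)
  then have "span {(k, p k)} \<in> \<A>"
    by (auto simp: \<A>_def dominated_subspace_def intro: span_base)
  have "\<exists>M\<in>\<A>. \<forall>G\<in>\<A>. M \<subseteq> G \<longrightarrow> G = M"
  proof (rule Zorn_Lemma2, intro ballI)
    fix \<G> assume "\<G> \<in> chains \<A>"
    then show "\<exists>U\<in>\<A>. \<forall>G\<in>\<G>. G \<subseteq> U"
      using \<open>span {(k, p k)} \<in> \<A>\<close>
      by (cases "\<G> = {}") (auto simp: \<A>_def chains_def intro!: dominated_subspace_Union)
  qed
  then obtain M where M: "dominated_subspace p M" "(k, p k) \<in> M"
    and maximal: "\<And>G. G \<in> \<A> \<Longrightarrow> M \<subseteq> G \<Longrightarrow> G = M"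
    unfolding \<A>_def by blast
  have "\<exists>a. (x, a) \<in> M" for x
  proof -
    obtain c where "dominated_subspace p (span (insert (x, c) M))"
      using dominated_subspace_extension_value[OF p M(1)] dominated_subspace_extend[OF p M(1)] by metis
    moreover have "M \<subseteq> span (insert (x, c) M)" by (meson span_superset subset_insertI subset_trans)
    ultimately have "span (insert (x, c) M) = M"
      using M(2) by (intro maximal) (auto simp: \<A>_def)
    then show ?thesis by (metis insertI1 span_base)
  qed
  then obtain g where "linear g" "\<And>x. (x, g x) \<in> M"
    using dominated_subspace_graph[OF p M(1)] by blast
  then show ?thesis
    using that dominated_subspace_le[OF M(1)] dominated_subspace_unique[OF p M(1) M(2)] by metis
qed

section \<open>Minkowski functionals in topological vector spaces\<close>

lemma tvs_continuous_on_affine: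
  assumes "tvs TYPE('z::{real_vector,topological_space})"
  shows "continuous_on UNIV (\<lambda>z::'z. a *\<^sub>R z + b)"
proof -
  have add: "continuous_on UNIV (\<lambda>p::'z \<times> 'z. fst p + snd p)"
    and mult: "continuous_on UNIV (\<lambda>p::real \<times> 'z. fst p *\<^sub>R snd p)"
    using assms unfolding tvs_def by auto
  have "continuous_on UNIV (\<lambda>z::'z. a *\<^sub>R z)"
    using continuous_on_compose2[OF mult continuous_on_Pair[OF continuous_on_const continuous_on_id]]
    by simp
  then show ?thesis
    using continuous_on_compose2[OF add continuous_on_Pair[OF _ continuous_on_const]] by simp
qed

lemma tvs_open_affine_vimage:
  assumes "tvs TYPE('z::{real_vector,topological_space})" "open (S::'z set)"
  shows "open {z. a *\<^sub>R z + b \<in> S}"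
  using continuous_on_open_vimage[OF open_UNIV] tvs_continuous_on_affine[OF assms(1)] assms(2)
  by (force simp: vimage_def)

lemma tvs_continuous_on_ray:
  assumes "tvs TYPE('z::{real_vector,topological_space})"
  shows "continuous_on UNIV (\<lambda>t::real. t *\<^sub>R (x::'z))"
proof -
  have "continuous_on UNIV (\<lambda>p::real \<times> 'z. fst p *\<^sub>R snd p)"
    using assms unfolding tvs_def by auto
  then show ?thesis
    using continuous_on_compose2[OF _ continuous_on_Pair[OF continuous_on_id continuous_on_const]]
    by fastforce
qed

lemma tvs_open_ray:
  assumes "tvs TYPE('z::{real_vector,topological_space})" "open (S::'z set)" "t0 *\<^sub>R x \<in> S"
  obtains d where "d > 0" "\<And>t. \<bar>t - t0\<bar> < d \<Longrightarrow> t *\<^sub>R x \<in> S"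
proof -
  have "open {t::real. t *\<^sub>R x \<in> S}"
    using continuous_on_open_vimage[OF open_UNIV] tvs_continuous_on_ray[OF assms(1)] assms(2)
    by (force simp: vimage_def)
  then obtain d where "d > 0" "ball t0 d \<subseteq> {t. t *\<^sub>R x \<in> S}"
    using openE assms(3) by blast
  then show ?thesis
    using that by (auto simp: dist_real_def abs_minus_commute subset_iff)
qed

definition minkowski_functional :: "'a::real_vector set \<Rightarrow> 'a \<Rightarrow> real" where
  "minkowski_functional U x = Inf {t. 0 < t \<and> (1/t) *\<^sub>R x \<in> U}"

lemma minkowski_functional_le:
  assumes "t > 0" "(1/t) *\<^sub>R x \<in> U"
  shows "minkowski_functional U x \<le> t"
  unfolding minkowski_functional_def
  by (rule cInf_lower) (use assms in \<open>auto simp: bdd_below_def intro: exI[of _ 0]\<close>)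

context
  fixes U :: "'z::{real_vector,topological_space} set"
  assumes tvs: "tvs TYPE('z)" and open_U: "open U" and convex_U: "convex U" and zero_U: "0 \<in> U"
begin

lemma minkowski_functional_absorbing: "{t. 0 < t \<and> (1/t) *\<^sub>R x \<in> U} \<noteq> {}"
proof -
  obtain d where "d > 0" "\<And>t. \<bar>t - 0\<bar> < d \<Longrightarrow> t *\<^sub>R x \<in> U"
    using tvs_open_ray[OF tvs open_U, of 0 x] zero_U by auto
  then have "2/d > 0 \<and> (1/(2/d)) *\<^sub>R x \<in> U" by simp
  then show ?thesis by blast
qed

lemma minkowski_functional_nonneg: "minkowski_functional U x \<ge> 0"
  unfolding minkowski_functional_def
  by (rule cInf_greatest[OF minkowski_functional_absorbing]) auto

lemma minkowski_functional_less_imp_mem: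
  assumes "minkowski_functional U x < s"
  shows "(1/s) *\<^sub>R x \<in> U"
proof -
  obtain t where t: "0 < t" "(1/t) *\<^sub>R x \<in> U" "t < s"
    using cInf_lessD[OF minkowski_functional_absorbing, of x s] assms
    by (auto simp: minkowski_functional_def)
  text \<open>Shrinking towards 0 stays in U by convexity.\<close>
  have "(t/s) *\<^sub>R ((1/t) *\<^sub>R x) + (1 - t/s) *\<^sub>R 0 \<in> U"
    using t zero_U convex_U unfolding convex_def by (metis add_diff_cancel_left' diff_add_cancel
      divide_nonneg_pos less_eq_real_def less_trans diff_ge_0_iff_ge divide_le_eq_1_pos)
  then show ?thesis using t by simp
qed

lemma minkowski_functional_scaleR:
  assumes "c > 0"
  shows "minkowski_functional U (c *\<^sub>R x) = c * minkowski_functional U x"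
proof -
  have le: "minkowski_functional U (c *\<^sub>R x) \<le> c * minkowski_functional U x" if "c > 0" for c x
  proof -
    have "minkowski_functional U (c *\<^sub>R x) / c \<le> minkowski_functional U x"
    proof (rule dense_ge)
      fix s assume s: "minkowski_functional U x < s"
      then have "s > 0" using minkowski_functional_nonneg[of x] by simp
      then have "minkowski_functional U (c *\<^sub>R x) \<le> c * s"
        using minkowski_functional_le[of "c * s" "c *\<^sub>R x" U]
          minkowski_functional_less_imp_mem[OF s] \<open>c > 0\<close> by simp
      then show "minkowski_functional U (c *\<^sub>R x) / c \<le> s" using \<open>c > 0\<close> by (simp add: field_simps)
    qed
    then show ?thesis using \<open>c > 0\<close> by (simp add: field_simps)
  qed
  have "minkowski_functional U x \<le> minkowski_functional U (c *\<^sub>R x) / c"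
    using le[of "1/c" "c *\<^sub>R x"] assms by simp
  then have "c * minkowski_functional U x \<le> minkowski_functional U (c *\<^sub>R x)"
    using assms by (simp add: pos_le_divide_eq mult.commute)
  then show ?thesis using le[OF assms, of x] by linarith
qed

lemma minkowski_functional_add_le:
  "minkowski_functional U (x + y) \<le> minkowski_functional U x + minkowski_functional U y"
proof -
  have sum: "minkowski_functional U (x + y) \<le> s + t"
    if s: "minkowski_functional U x < s" and t: "minkowski_functional U y < t" for s t
  proof -
    have pos: "s > 0" "t > 0"
      using minkowski_functional_nonneg[of x] minkowski_functional_nonneg[of y] s t by auto
    have "(s/(s+t)) *\<^sub>R ((1/s) *\<^sub>R x) + (t/(s+t)) *\<^sub>R ((1/t) *\<^sub>R y) \<in> U"
      using convexD[OF convex_U minkowski_functional_less_imp_mem[OF s]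
          minkowski_functional_less_imp_mem[OF t], of "s/(s+t)" "t/(s+t)"] pos
      by (simp add: add_divide_distrib[symmetric] del: scaleR_scaleR)
    moreover have "(s/(s+t)) *\<^sub>R ((1/s) *\<^sub>R x) + (t/(s+t)) *\<^sub>R ((1/t) *\<^sub>R y) = (1/(s+t)) *\<^sub>R (x + y)"
      using pos by (simp add: scaleR_add_right)
    ultimately show ?thesis using minkowski_functional_le[of "s+t" "x+y"] pos by simp
  qed
  have "minkowski_functional U (x + y) - minkowski_functional U y \<le> minkowski_functional U x"
  proof (rule dense_ge)
    fix s assume s: "minkowski_functional U x < s"
    have "minkowski_functional U (x + y) - s \<le> minkowski_functional U y"
    proof (rule dense_ge)
      fix t assume "minkowski_functional U y < t"
      then show "minkowski_functional U (x + y) - s \<le> t" using sum[OF s] by fastforce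
    qed
    then show "minkowski_functional U (x + y) - minkowski_functional U y \<le> s" by simp
  qed
  then show ?thesis by simp
qed

lemma sublinear_minkowski_functional: "sublinear (minkowski_functional U)"
  unfolding sublinear_def using minkowski_functional_add_le minkowski_functional_scaleR by blast

lemma minkowski_functional_less_1_iff: "minkowski_functional U x < 1 \<longleftrightarrow> x \<in> U"
proof
  assume "minkowski_functional U x < 1"
  then show "x \<in> U" using minkowski_functional_less_imp_mem by fastforce
next
  assume "x \<in> U"
  then obtain d where d: "d > 0" "\<And>t. \<bar>t - 1\<bar> < d \<Longrightarrow> t *\<^sub>R x \<in> U"
    using tvs_open_ray[OF tvs open_U, of 1 x] by auto
  have "minkowski_functional U x \<le> 1/(1 + d/2)"
    using minkowski_functional_le[of "1/(1 + d/2)" x U] d by simp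
  also have "\<dots> < 1" using d by (simp add: field_simps)
  finally show "minkowski_functional U x < 1" .
qed

end

section \<open>Separation by continuous linear functionals\<close>

lemma tvs_linear_continuous_if_bounded:
  fixes g :: "'z::{real_vector,topological_space} \<Rightarrow> real"
  assumes tvs: "tvs TYPE('z)" and lin: "linear g"
    and U: "open U" "0 \<in> U" and bounded: "\<And>u. u \<in> U \<Longrightarrow> g u < 1"
  shows "continuous_on UNIV g"
  unfolding continuous_on_open_vimage[OF open_UNIV] open_subopen[where S = "g -` _ \<inter> UNIV"]
proof (intro allI impI ballI)
  fix S y assume "open S" "y \<in> g -` S \<inter> UNIV"
  then obtain e where e: "e > 0" "ball (g y) e \<subseteq> S" using openE by force
  text \<open>On the symmetric neighbourhood N of 0 the functional satisfies |g| < 1.\<close>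
  define N where "N = U \<inter> {v. (-1) *\<^sub>R v + 0 \<in> U}"
  define T where "T = {z. (1/e) *\<^sub>R z + (- (1/e) *\<^sub>R y) \<in> N}"
  have "open T"
    unfolding T_def N_def by (intro tvs_open_affine_vimage[OF tvs] open_Int tvs_open_affine_vimage U)
  moreover have "y \<in> T" unfolding T_def N_def using U by simp
  moreover have "T \<subseteq> g -` S"
  proof
    fix z assume "z \<in> T"
    then have "g ((1/e) *\<^sub>R (z - y)) < 1" "g (- ((1/e) *\<^sub>R (z - y))) < 1"
      using bounded unfolding T_def N_def by (auto simp: algebra_simps)
    then have "\<bar>g z - g y\<bar> < e"
      using e(1) linear_scale[OF lin] linear_neg[OF lin] linear_diff[OF lin]
      by (auto simp: abs_less_iff field_simps)
    then show "z \<in> g -` S" using e(2) by (auto simp: dist_real_def abs_minus_commute)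
  qed
  ultimately show "\<exists>T. open T \<and> y \<in> T \<and> T \<subseteq> g -` S \<inter> UNIV" by blast
qed

lemma tvs_separation_open_convex:
  fixes W A :: "'z::{real_vector,topological_space} set"
  assumes tvs: "tvs TYPE('z)" and W: "open W" "convex W" "0 \<in> W"
    and A: "convex A" "a0 \<in> A" and disjoint: "\<And>a w. a \<in> A \<Longrightarrow> w \<in> W \<Longrightarrow> z0 + w \<noteq> a"
  obtains g where "g \<in> dual_space" "\<And>a w. a \<in> A \<Longrightarrow> w \<in> W \<Longrightarrow> g a < g (z0 + w)"
proof -
  text \<open>Apply Hahn--Banach to the Minkowski functional of the open convex set
    U = A - a0 - W, which does not contain z0 - a0.\<close>
  define U where "U = {v. \<exists>a\<in>A. \<exists>w\<in>W. v = a - a0 - w}"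
  have U_eq: "U = (\<Union>a\<in>A. {v. (-1) *\<^sub>R v + (a - a0) \<in> W})"
    unfolding U_def by (auto simp: algebra_simps)
  have open_U: "open U" unfolding U_eq by (intro open_UN ballI tvs_open_affine_vimage[OF tvs W(1)])
  have zero_U: "0 \<in> U" unfolding U_def using A(2) W(3) by force
  have convex_U: "convex U"
  proof (rule convexI)
    fix x y :: 'z and u v :: real
    assume "x \<in> U" "y \<in> U" and uv: "u \<ge> 0" "v \<ge> 0" "u + v = 1"
    then obtain a w a' w' where aw: "a \<in> A" "w \<in> W" "x = a - a0 - w" "a' \<in> A" "w' \<in> W" "y = a' - a0 - w'"
      unfolding U_def by blast
    have "u *\<^sub>R x + v *\<^sub>R y = (u *\<^sub>R a + v *\<^sub>R a') - (u + v) *\<^sub>R a0 - (u *\<^sub>R w + v *\<^sub>R w')"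
      unfolding aw by (simp add: algebra_simps)
    then show "u *\<^sub>R x + v *\<^sub>R y \<in> U"
      using convexD[OF A(1) aw(1,4) uv] convexD[OF W(2) aw(2,5) uv] uv(3) unfolding U_def by auto
  qed
  have "z0 - a0 \<notin> U"
    using disjoint unfolding U_def by (auto simp: algebra_simps)
  note mf = minkowski_functional_less_1_iff[OF tvs open_U convex_U zero_U]
  obtain g where lin: "linear g" and dom: "\<And>x. g x \<le> minkowski_functional U x"
    and at_z0: "g (z0 - a0) = minkowski_functional U (z0 - a0)"
    using sublinear_dominated_linear_exists[OF sublinear_minkowski_functional[OF tvs open_U convex_U zero_U]]
    by blast
  have below_1: "g u < 1" if "u \<in> U" for u using dom[of u] mf[of u] that by linarith
  have above_1: "1 \<le> g (z0 - a0)" using at_z0 mf[of "z0 - a0"] \<open>z0 - a0 \<notin> U\<close> by linarith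
  have "g a < g (z0 + w)" if "a \<in> A" "w \<in> W" for a w
  proof -
    have "g (a - a0 - w) < g (z0 - a0)"
      using below_1 above_1 that unfolding U_def by fastforce
    then show ?thesis using linear_diff[OF lin] linear_add[OF lin] by simp
  qed
  moreover have "g \<in> dual_space"
    using tvs_linear_continuous_if_bounded[OF tvs lin open_U zero_U below_1] lin
    by (simp add: dual_space_def)
  ultimately show ?thesis using that by blast
qed

section \<open>Lower continuity from uniform scalar upper semicontinuity\<close>

lemma upper_closed_sets_add_mem:
  assumes "A \<in> upper_closed_sets C" "a \<in> A" "c \<in> C"
  shows "a + c \<in> A"
proof -
  have A: "A = closure {a + c | a c. a \<in> A \<and> c \<in> C}"
    using assms(1) unfolding upper_closed_sets_def by blast
  have "a + c \<in> {a + c | a c. a \<in> A \<and> c \<in> C}" using assms(2,3) by blast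
  then show ?thesis by (subst A) (rule closure_subset[THEN subsetD])
qed

lemma linear_nonpos_on_cone_if_bounded_above:
  fixes g :: "'a::real_vector \<Rightarrow> real"
  assumes "linear g" "cone C" "c \<in> C" "a0 \<in> A"
    and upward: "\<And>a c. a \<in> A \<Longrightarrow> c \<in> C \<Longrightarrow> a + c \<in> A"
    and bounded: "\<And>a. a \<in> A \<Longrightarrow> g a < M"
  shows "g c \<le> 0"
proof (rule ccontr)
  assume pos: "\<not> g c \<le> 0"
  define t where "t = (M - g a0) / g c"
  have "t \<ge> 0" using bounded[OF assms(4)] pos by (simp add: t_def)
  then have "t *\<^sub>R c \<in> C" using assms(2,3) by (simp add: cone_def)
  then have "g (a0 + t *\<^sub>R c) < M" using bounded upward assms(4) by blast
  moreover have "g (a0 + t *\<^sub>R c) = M"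
    using pos by (simp add: t_def linear_add[OF assms(1)] linear_scale[OF assms(1)])
  ultimately show False by simp
qed

lemma zero_in_neg_dual_cone: "(\<lambda>z. 0) \<in> neg_dual_cone C"
  by (simp add: neg_dual_cone_def dual_space_def linear_zero)

lemma separating_generator_exists:
  fixes A W :: "'z::{real_vector,topological_space} set"
  assumes tvs: "tvs TYPE('z)" and W: "open W" "convex W" "0 \<in> W"
    and A: "A \<in> upper_closed_sets C" "convex A" and "cone C"
    and B: "{(\<lambda>z. t * l z) | t l. t \<ge> 0 \<and> l \<in> B} = neg_dual_cone C"
    and disjoint: "\<And>a w. a \<in> A \<Longrightarrow> w \<in> W \<Longrightarrow> z0 + w \<noteq> a"
  shows "\<exists>l\<in>B. ereal (- l z0) + (SUP w\<in>W. ereal (- l w)) \<le> (INF a\<in>A. ereal (- l a))"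
proof (cases "A = {}")
  case True
  have "(\<lambda>z. 0) \<in> {(\<lambda>z. t * l z) | t l. t \<ge> 0 \<and> l \<in> B}" using B zero_in_neg_dual_cone by simp
  then obtain l where "l \<in> B" by blast
  then show ?thesis using True by auto
next
  case False
  then obtain a0 where "a0 \<in> A" by blast
  then obtain g where g: "g \<in> dual_space" and sep: "\<And>a w. a \<in> A \<Longrightarrow> w \<in> W \<Longrightarrow> g a < g (z0 + w)"
    using tvs_separation_open_convex[OF tvs W A(2) _ disjoint] by blast
  have lin: "linear g" using g by (simp add: dual_space_def)
  have "g c \<le> 0" if "c \<in> C" for c
    using sep[OF _ W(3)] upper_closed_sets_add_mem[OF A(1)]
    by (intro linear_nonpos_on_cone_if_bounded_above[OF lin \<open>cone C\<close> that \<open>a0 \<in> A\<close>]) auto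
  then have "g \<in> neg_dual_cone C" using g by (simp add: neg_dual_cone_def)
  then obtain t l where tl: "g = (\<lambda>z. t * l z)" "t \<ge> 0" "l \<in> B" using B by blast
  have "t > 0" using sep[OF \<open>a0 \<in> A\<close> W(3)] tl(1,2) by (cases "t = 0") auto
  have "l a < l (z0 + w)" if "a \<in> A" "w \<in> W" for a w
    using sep[OF that] \<open>t > 0\<close> tl(1) by simp
  moreover have "linear l"
  proof -
    have "l = (\<lambda>x. (1/t) * x) \<circ> g" using tl(1) \<open>t > 0\<close> by auto
    then show ?thesis using linear_compose[OF lin linear_times, of "1/t"] by (simp only:)
  qed
  ultimately have "(SUP w\<in>W. ereal (- l z0) + ereal (- l w)) \<le> ereal (- l a)" if "a \<in> A" for a
    using that linear_add by (fastforce intro!: SUP_least)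
  then have "(SUP w\<in>W. ereal (- l z0) + ereal (- l w)) \<le> (INF a\<in>A. ereal (- l a))"
    by (rule INF_greatest)
  moreover have "(SUP w\<in>W. ereal (- l z0) + ereal (- l w)) = ereal (- l z0) + (SUP w\<in>W. ereal (- l w))"
    by (rule SUP_ereal_add_right) (use W(3) in auto)
  ultimately have "ereal (- l z0) + (SUP w\<in>W. ereal (- l w)) \<le> (INF a\<in>A. ereal (- l a))"
    by simp
  then show ?thesis using tl(3) by blast
qed

lemma locally_convex_tvs_convex_nbhd:
  assumes "locally_convex_tvs TYPE('z::{real_vector,topological_space})" "nbhd (z0::'z) V"
  obtains W where "open W" "convex W" "0 \<in> W" "\<And>w. w \<in> W \<Longrightarrow> z0 + w \<in> V"
proof -
  obtain Ob where Ob: "open Ob" "z0 \<in> Ob" "Ob \<subseteq> V" using assms(2) unfolding nbhd_def by blast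
  have "open {w::'z. 1 *\<^sub>R w + z0 \<in> Ob}"
    using assms(1) Ob(1) by (intro tvs_open_affine_vimage) (simp_all add: locally_convex_tvs_def)
  moreover have "0 \<in> {w::'z. 1 *\<^sub>R w + z0 \<in> Ob}" using Ob(2) by simp
  ultimately obtain W where "open W" "convex W" "0 \<in> W" "W \<subseteq> {w. 1 *\<^sub>R w + z0 \<in> Ob}"
    using assms(1) unfolding locally_convex_tvs_def by blast
  then show ?thesis using that Ob(3) by (auto simp: add.commute)
qed

lemma uniform_gap_constant:
  fixes B :: "('a \<Rightarrow> real) set"
  assumes "(INF l\<in>B. SUP w\<in>W. ereal (- l w)) > 0" "(SUP l\<in>B. ereal (l z0)) < \<infinity>"
  obtains \<epsilon> where "\<epsilon> > 0" "\<And>l. l \<in> B \<Longrightarrow> ereal \<epsilon> \<le> (SUP w\<in>W. ereal (- l w))"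
    "\<And>l. l \<in> B \<Longrightarrow> l z0 < 1 / \<epsilon>"
proof -
  obtain d where "0 < ereal d" and d: "ereal d < (INF l\<in>B. SUP w\<in>W. ereal (- l w))"
    using ereal_dense2 assms(1) by blast
  obtain m0 where m0: "(SUP l\<in>B. ereal (l z0)) < ereal m0"
    using ereal_dense2 assms(2) by blast
  define m where "m = max m0 1"
  define \<epsilon> where "\<epsilon> = min d (1 / m)"
  have "d > 0" "m > 0" using \<open>0 < ereal d\<close> by (simp_all add: m_def)
  then have \<epsilon>: "\<epsilon> > 0" "\<epsilon> \<le> d" "m \<le> 1 / \<epsilon>"
    by (auto simp: \<epsilon>_def min_def field_simps)
  show ?thesis
  proof
    show "ereal \<epsilon> \<le> (SUP w\<in>W. ereal (- l w))" if "l \<in> B" for l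
      using order.trans[OF _ less_imp_le[OF order.strict_trans2[OF d INF_lower[OF that]]], of "ereal \<epsilon>"]
        \<epsilon>(2) by simp
    show "l z0 < 1 / \<epsilon>" if "l \<in> B" for l
      using order.strict_trans1[OF SUP_upper[OF that] m0] \<epsilon>(3) by (simp add: m_def)
  qed (fact \<epsilon>(1))
qed

lemma ereal_upper_estimate_fails:
  fixes \<phi>0 \<phi> s :: ereal and a \<epsilon> :: real
  assumes "\<phi>0 \<le> ereal (- a)" "ereal (- a) + s \<le> \<phi>" "ereal \<epsilon> \<le> s" "\<epsilon> > 0" "a < 1 / \<epsilon>"
  shows "\<not> (if \<phi>0 = -\<infinity> then \<phi> < ereal (- 1 / \<epsilon>) else \<phi> < \<phi>0 + ereal \<epsilon>)"
proof -
  have sum: "ereal (- a) + ereal \<epsilon> \<le> \<phi>" using assms(2,3) by (meson add_left_mono order_trans)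
  have "\<phi>0 + ereal \<epsilon> \<le> \<phi>" using add_right_mono[OF assms(1)] sum by (rule order_trans)
  moreover have "ereal (- 1 / \<epsilon>) \<le> \<phi>"
    using assms(4,5) order_trans[OF _ sum, of "ereal (- 1 / \<epsilon>)"] by simp
  ultimately show ?thesis by (auto simp: not_less)
qed

theorem mainTheorem16:
  fixes f :: "'x::{real_vector,topological_space} \<Rightarrow> 'z::{real_vector,topological_space} set"
    and C :: "'z set" and x0 :: 'x and B :: "('z \<Rightarrow> real) set"
  assumes X_tvs: "tvs TYPE('x)" and Z_lc: "locally_convex_tvs TYPE('z)"
    and C_ne: "C \<noteq> {}" and C_closed: "closed C" and C_convex: "convex C"
    and C_cone: "cone C"
    and C_neg: "neg_dual_cone C \<noteq> {\<lambda>z. 0}"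
    and f_vals: "\<forall>x. f x \<in> upper_closed_sets C"
    and f_convex: "\<forall>x. convex (f x)"
    and B_dual: "B \<subseteq> dual_space"
    and B_gen: "{(\<lambda>z. t * l z) | t l. t \<ge> 0 \<and> l \<in> B} = neg_dual_cone C"
    and B_sup: "\<forall>z. (SUP l\<in>B. ereal (l z)) < \<infinity>"
    and B_inf: "\<forall>V. nbhd 0 V \<longrightarrow> (INF l\<in>B. SUP z\<in>V. ereal (- l z)) > 0"
    and usc_unif: "\<forall>\<epsilon>>0. \<exists>U. nbhd x0 U \<and> (\<forall>x\<in>U. \<forall>l\<in>B.
          (if scalarization f l x0 = -\<infinity>
           then scalarization f l x < ereal (- 1 / \<epsilon>)
           else scalarization f l x < scalarization f l x0 + ereal \<epsilon>))"
  shows "lower_continuous_at f x0"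
proof (unfold lower_continuous_at_def, intro ballI allI impI)
  fix z0 V assume z0: "z0 \<in> f x0" and "nbhd z0 V"
  have tvs: "tvs TYPE('z)" using Z_lc by (simp add: locally_convex_tvs_def)
  obtain W where W: "open W" "convex W" "0 \<in> W" and WV: "\<And>w. w \<in> W \<Longrightarrow> z0 + w \<in> V"
    using locally_convex_tvs_convex_nbhd[OF Z_lc \<open>nbhd z0 V\<close>] by blast
  have "nbhd 0 W" using W(1,3) unfolding nbhd_def by blast
  obtain \<epsilon> where "\<epsilon> > 0" and gap_W: "\<And>l. l \<in> B \<Longrightarrow> ereal \<epsilon> \<le> (SUP w\<in>W. ereal (- l w))"
    and bound_z0: "\<And>l. l \<in> B \<Longrightarrow> l z0 < 1 / \<epsilon>"
    using uniform_gap_constant[OF B_inf[rule_format, OF \<open>nbhd 0 W\<close>] B_sup[rule_format, of z0]] by blast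
  obtain U where "nbhd x0 U" and U: "\<And>x l. x \<in> U \<Longrightarrow> l \<in> B \<Longrightarrow>
      (if scalarization f l x0 = -\<infinity> then scalarization f l x < ereal (- 1 / \<epsilon>)
       else scalarization f l x < scalarization f l x0 + ereal \<epsilon>)"
    using usc_unif \<open>\<epsilon> > 0\<close> by blast
  have "f x \<inter> V \<noteq> {}" if "x \<in> U" for x
  proof
    assume "f x \<inter> V = {}"
    then have "\<And>a w. a \<in> f x \<Longrightarrow> w \<in> W \<Longrightarrow> z0 + w \<noteq> a" using WV by blast
    then obtain l where "l \<in> B"
      and gap: "ereal (- l z0) + (SUP w\<in>W. ereal (- l w)) \<le> scalarization f l x"
      unfolding scalarization_def
      using separating_generator_exists[OF tvs W f_vals[rule_format] f_convex[rule_format]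
          C_cone B_gen] by blast
    have "scalarization f l x0 \<le> ereal (- l z0)"
      unfolding scalarization_def using z0 by (rule INF_lower)
    then show False
      using ereal_upper_estimate_fails[OF _ gap gap_W[OF \<open>l \<in> B\<close>] \<open>\<epsilon> > 0\<close> bound_z0[OF \<open>l \<in> B\<close>]]
        U[OF that \<open>l \<in> B\<close>] by blast
  qed
  then show "\<exists>U. nbhd x0 U \<and> (\<forall>x\<in>U. f x \<inter> V \<noteq> {})" using \<open>nbhd x0 U\<close> by blast
qed

end
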